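(* Let $n\ge 2$ and let $G=K_n$ on vertices $v_1,\dots,v_n$ with edge weights $w_{\{i,j\}}\in(0,1)$. Then $\operatorname{eptw}(G)=\frac{1}{1-W}$, where $W=\min_{1\le i\le n}\prod_{j\ne i}(1-w_{\{i,j\}})$.
   Context: Let $G$ be a finite simple graph in which each edge $uv$ has a weight $w_{uv}\in(0,1)$. Weighted zero forcing: start with a set $B\subseteq V(G)$ of blue vertices, all other vertices white. In each round, simultaneously, for every blue vertex $u$ that has exactly one white neighbor $v$ (with respect to the coloring at the start of the round), $u$ attempts to force $v$, succeeding with probability $w_{uv}$, all attempts being independent; a white vertex becomes blue at the end of the round if at least one attempt on it succeeds. $B$ is a weighted zero forcing set of $G$ if this process can eventually color all of $V(G)$ blue (equivalently, $B$ is a zero forcing set of the underlying unweighted graph under the standard rule); $\operatorname{Z}(G)$ is the minimum size of such a set. $\operatorname{ptw}(G,B)$ is the random variable giving the round in which the last white vertex becomes blue ($0$ if $B=V(G)$); $\operatorname{eptw}(G,B)=\mathbb{E}[\operatorname{ptw}(G,B)]$; $\operatorname{eptw}(G)=\min\{\operatorname{eptw}(G,B): B$ a weighted zero forcing set with $|B|=\operatorname{Z}(G)\}$. *)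

theory Defs
  imports "HOL-Probability.Probability"
begin

text \<open>A finite simple graph is given by a finite vertex set V and a symmetric,
irreflexive adjacency relation E; only neighbours inside V are considered.
Edge weights are given by a symmetric function w.\<close>

definition white_nbrs :: "'a set \<Rightarrow> ('a \<Rightarrow> 'a \<Rightarrow> bool) \<Rightarrow> 'a set \<Rightarrow> 'a \<Rightarrow> 'a set" where
  "white_nbrs V E S u = {x \<in> V. E u x \<and> x \<notin> S}"

definition zf_step :: "'a set \<Rightarrow> ('a \<Rightarrow> 'a \<Rightarrow> bool) \<Rightarrow> 'a set \<Rightarrow> 'a set" where
  "zf_step V E S = S \<union> {v. \<exists>u\<in>S. white_nbrs V E S u = {v}}"

definition is_zf_set :: "'a set \<Rightarrow> ('a \<Rightarrow> 'a \<Rightarrow> bool) \<Rightarrow> 'a set \<Rightarrow> bool" where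
  "is_zf_set V E B \<longleftrightarrow> B \<subseteq> V \<and> (\<exists>k. (zf_step V E ^^ k) B = V)"

definition zf_number :: "'a set \<Rightarrow> ('a \<Rightarrow> 'a \<Rightarrow> bool) \<Rightarrow> nat" where
  "zf_number V E = Min (card ` {B. is_zf_set V E B})"

definition attempts :: "'a set \<Rightarrow> ('a \<Rightarrow> 'a \<Rightarrow> bool) \<Rightarrow> 'a set \<Rightarrow> ('a \<times> 'a) set" where
  "attempts V E S = {(u, v). u \<in> S \<and> white_nbrs V E S u = {v}}"

definition wstep :: "'a set \<Rightarrow> ('a \<Rightarrow> 'a \<Rightarrow> bool) \<Rightarrow> ('a \<Rightarrow> 'a \<Rightarrow> real) \<Rightarrow> 'a set \<Rightarrow> 'a set pmf" where
  "wstep V E w S =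
     map_pmf (\<lambda>f. S \<union> {v. \<exists>u. (u, v) \<in> attempts V E S \<and> f (u, v)})
       (Pi_pmf (attempts V E S) False (\<lambda>(u, v). bernoulli_pmf (w u v)))"

fun wstate :: "'a set \<Rightarrow> ('a \<Rightarrow> 'a \<Rightarrow> bool) \<Rightarrow> ('a \<Rightarrow> 'a \<Rightarrow> real) \<Rightarrow> 'a set \<Rightarrow> nat \<Rightarrow> 'a set pmf" where
  "wstate V E w B 0 = return_pmf B"
| "wstate V E w B (Suc k) = bind_pmf (wstate V E w B k) (wstep V E w)"

text \<open>Probability that ptw(G,B) = k: for k = 0 this means B = V; for k \<ge> 1 it means
not all vertices are blue at the end of round k-1 but all are blue at the end of round k
(joint distribution of the blue sets after rounds k-1 and k).\<close>

definition ptw_prob :: "'a set \<Rightarrow> ('a \<Rightarrow> 'a \<Rightarrow> bool) \<Rightarrow> ('a \<Rightarrow> 'a \<Rightarrow> real) \<Rightarrow> 'a set \<Rightarrow> nat \<Rightarrow> real" where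
  "ptw_prob V E w B k =
     (if k = 0 then (if B = V then 1 else 0)
      else measure_pmf.prob
             (bind_pmf (wstate V E w B (k - 1)) (\<lambda>S. map_pmf (Pair S) (wstep V E w S)))
             {(S, T). S \<noteq> V \<and> T = V})"

definition eptw_set :: "'a set \<Rightarrow> ('a \<Rightarrow> 'a \<Rightarrow> bool) \<Rightarrow> ('a \<Rightarrow> 'a \<Rightarrow> real) \<Rightarrow> 'a set \<Rightarrow> real" where
  "eptw_set V E w B = (\<Sum>k. real k * ptw_prob V E w B k)"

definition eptw :: "'a set \<Rightarrow> ('a \<Rightarrow> 'a \<Rightarrow> bool) \<Rightarrow> ('a \<Rightarrow> 'a \<Rightarrow> real) \<Rightarrow> real" where
  "eptw V E w = Min (eptw_set V E w ` {B. is_zf_set V E B \<and> card B = zf_number V E})"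

end

theory Submission
  imports Defs
begin

text \<open>In \<open>K\<^sub>n\<close> every blue vertex is adjacent to every white vertex, so a force can happen
only when exactly one vertex \<open>i\<close> is white. Hence the zero forcing sets are \<open>V\<close> and the sets
\<open>V - {i}\<close>, and the minimum ones are the \<open>V - {i}\<close>. Starting from \<open>V - {i}\<close>, in every round
all other vertices try to force \<open>i\<close>; the round fails with probability
\<open>P\<^sub>i = \<Prod>u\<noteq>i. (1 - w u i)\<close> and a failed round leaves the colouring unchanged. So the
propagation time is geometric with success probability \<open>1 - P\<^sub>i\<close> and mean \<open>1 / (1 - P\<^sub>i)\<close>,
which is increasing in \<open>P\<^sub>i\<close>; minimising over \<open>i\<close> gives the formula.\<close>

abbreviation (input) complete_adj :: "'a \<Rightarrow> 'a \<Rightarrow> bool" where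
  "complete_adj \<equiv> \<lambda>i j. i \<noteq> j"

lemma bernoulli_pmf_0: "bernoulli_pmf 0 = return_pmf False"
  by (rule pmf_eqI) (simp split: split_indicator)

lemma bernoulli_pmf_1: "bernoulli_pmf 1 = return_pmf True"
  by (rule pmf_eqI) (simp split: split_indicator)

lemma bind_bernoulli_pmf_thinning:
  assumes "0 \<le> q" "q \<le> 1" "0 \<le> p" "p \<le> 1"
  shows "bind_pmf (bernoulli_pmf q) (\<lambda>b. bernoulli_pmf (if b then p else 0)) = bernoulli_pmf (q * p)"
proof (rule pmf_eqI)
  fix x :: bool
  have "0 \<le> q * p" "q * p \<le> 1" using assms by (auto simp: mult_le_one)
  with assms show "pmf (bind_pmf (bernoulli_pmf q) (\<lambda>b. bernoulli_pmf (if b then p else 0))) x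
      = pmf (bernoulli_pmf (q * p)) x"
    by (cases x) (simp_all add: pmf_bind algebra_simps)
qed

lemma measure_bind_pmf:
  "measure_pmf.prob (bind_pmf M f) A = measure_pmf.expectation M (\<lambda>x. measure_pmf.prob (f x) A)"
  unfolding measure_pmf_bind
  by (rule measure_pmf.measure_bind[where N="count_space UNIV"])
    (auto simp: space_subprob_algebra intro: prob_space_imp_subprob_space measure_pmf.prob_space_axioms)

lemma measure_bind_bernoulli_pmf:
  assumes "0 \<le> q" "q \<le> 1"
  shows "measure_pmf.prob (bind_pmf (bernoulli_pmf q) f) A
           = q * measure_pmf.prob (f True) A + (1 - q) * measure_pmf.prob (f False) A"
  using assms by (simp add: measure_bind_pmf)

lemma map_Pi_pmf_all_False:
  assumes "finite A"
  shows "map_pmf (\<lambda>f. \<forall>a\<in>A. \<not> f a) (Pi_pmf A False p) = bernoulli_pmf (\<Prod>a\<in>A. pmf (p a) False)"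
proof (rule pmf_eqI)
  fix x :: bool
  let ?P = "\<Prod>a\<in>A. pmf (p a) False"
  have P: "0 \<le> ?P" "?P \<le> 1" by (auto intro: prod_nonneg prod_le_1 pmf_le_1)
  have "(\<lambda>f. \<forall>a\<in>A. \<not> f a) -` {True} = Pi A (\<lambda>_. {False})" by auto
  then have "pmf (map_pmf (\<lambda>f. \<forall>a\<in>A. \<not> f a) (Pi_pmf A False p)) True = ?P"
    using assms by (simp add: pmf_map measure_Pi_pmf_Pi measure_pmf_single)
  with P show "pmf (map_pmf (\<lambda>f. \<forall>a\<in>A. \<not> f a) (Pi_pmf A False p)) x = pmf (bernoulli_pmf ?P) x"
    by (cases x) (simp_all add: pmf_False_conv_True[of "map_pmf _ _"])
qed

lemma mono_on_Min_commute:
  fixes f :: "'a::linorder \<Rightarrow> 'b::linorder"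
  assumes "mono_on A f" "finite A" "A \<noteq> {}"
  shows "f (Min A) = Min (f ` A)"
proof (rule Min_eqI[symmetric])
  show "finite (f ` A)" "f (Min A) \<in> f ` A" using assms(2,3) by simp_all
  show "f (Min A) \<le> y" if "y \<in> f ` A" for y
  proof -
    obtain x where "x \<in> A" "y = f x" using \<open>y \<in> f ` A\<close> by blast
    moreover have "Min A \<in> A" "Min A \<le> x" using assms(2,3) \<open>x \<in> A\<close> by simp_all
    ultimately show ?thesis using assms(1) by (simp add: mono_onD)
  qed
qed

definition fail_prob :: "'a set \<Rightarrow> ('a \<Rightarrow> 'a \<Rightarrow> real) \<Rightarrow> 'a \<Rightarrow> real" where
  "fail_prob V w i = (\<Prod>u\<in>V - {i}. 1 - w u i)"

lemma fail_prob_bounds: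
  assumes "i \<in> V" "\<forall>u\<in>V. \<forall>v\<in>V. u \<noteq> v \<longrightarrow> 0 \<le> w u v \<and> w u v \<le> 1"
  shows "0 \<le> fail_prob V w i" "fail_prob V w i \<le> 1"
proof -
  have factor: "0 \<le> 1 - w u i \<and> 1 - w u i \<le> 1" if "u \<in> V - {i}" for u
    using assms that by simp
  show "0 \<le> fail_prob V w i"
    unfolding fail_prob_def by (rule prod_nonneg) (use factor in blast)
  show "fail_prob V w i \<le> 1"
    unfolding fail_prob_def by (rule prod_le_1) (use factor in blast)
qed

lemma card_ge_2_obtains_other:
  assumes "2 \<le> card V" "i \<in> V"
  obtains u where "u \<in> V" "u \<noteq> i"
proof -
  have "card (V - {i}) \<noteq> 0" using assms by (simp add: card_Diff_singleton)
  then have "V - {i} \<noteq> {}" by (metis card.empty)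
  then show ?thesis using that by blast
qed

lemma fail_prob_less_1:
  assumes "2 \<le> card V" "i \<in> V" "\<forall>u\<in>V. \<forall>v\<in>V. u \<noteq> v \<longrightarrow> 0 < w u v \<and> w u v \<le> 1"
  shows "fail_prob V w i < 1"
proof -
  obtain u where u: "u \<in> V - {i}" using card_ge_2_obtains_other[OF assms(1,2)] by blast
  have fin: "finite V" using assms(1) by (metis card.infinite not_numeral_le_zero)
  have pos: "0 < w v i \<and> w v i \<le> 1" if "v \<in> V - {i}" for v
    using assms(2,3) that by blast
  have "(\<Prod>u\<in>V - {i}. 1 - w u i) < (\<Prod>u\<in>V - {i}. 1)"
    by (rule prod_mono_strict[OF u]) (use pos u fin in force)+
  then show ?thesis unfolding fail_prob_def by simp
qed

lemma white_nbrs_complete: "u \<in> S \<Longrightarrow> white_nbrs V complete_adj S u = V - S"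
  by (auto simp: white_nbrs_def)

lemma attempts_complete_all_blue: "attempts V complete_adj V = {}"
  by (simp add: attempts_def white_nbrs_complete)

lemma attempts_complete_one_white:
  assumes "i \<in> V"
  shows "attempts V complete_adj (V - {i}) = (V - {i}) \<times> {i}"
proof -
  have "V - (V - {i}) = {i}" using assms by blast
  then have "white_nbrs V complete_adj (V - {i}) u = {i}" if "u \<in> V - {i}" for u
    by (simp only: white_nbrs_complete[OF that])
  then show ?thesis unfolding attempts_def by blast
qed

lemma wstep_complete_all_blue: "wstep V complete_adj w V = return_pmf V"
  by (simp add: wstep_def attempts_complete_all_blue map_return_pmf)

lemma wstep_complete_one_white:
  assumes "finite V" "i \<in> V" and w: "\<forall>u\<in>V. \<forall>v\<in>V. u \<noteq> v \<longrightarrow> 0 \<le> w u v \<and> w u v \<le> 1"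
  shows "wstep V complete_adj w (V - {i}) =
    map_pmf (\<lambda>b. if b then V - {i} else V) (bernoulli_pmf (fail_prob V w i))"
proof -
  let ?A = "(V - {i}) \<times> {i}"
  let ?p = "\<lambda>(u, v). bernoulli_pmf (w u v)"
  have outcome: "(\<lambda>f. (V - {i}) \<union> {v. \<exists>u. (u, v) \<in> ?A \<and> f (u, v)}) =
      (\<lambda>b. if b then V - {i} else V) \<circ> (\<lambda>f. \<forall>a\<in>?A. \<not> f a)"
    using assms(2) by (intro ext) auto
  have "?A = (\<lambda>u. (u, i)) ` (V - {i})" by auto
  then have "(\<Prod>a\<in>?A. pmf (?p a) False) = (\<Prod>u\<in>V - {i}. pmf (bernoulli_pmf (w u i)) False)"
    by (simp add: prod.reindex inj_on_def)
  also have "\<dots> = fail_prob V w i"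
  proof -
    have "0 \<le> w u i \<and> w u i \<le> 1" if "u \<in> V - {i}" for u
      using w assms(2) that by blast
    then show ?thesis unfolding fail_prob_def by (intro prod.cong) auto
  qed
  finally have all_fail:
      "map_pmf (\<lambda>f. \<forall>a\<in>?A. \<not> f a) (Pi_pmf ?A False ?p) = bernoulli_pmf (fail_prob V w i)"
    using map_Pi_pmf_all_False[of ?A ?p] assms(1) by simp
  show ?thesis
    by (simp only: wstep_def attempts_complete_one_white[OF assms(2)] outcome map_pmf_compose
        o_apply all_fail)
qed

lemma wstate_complete_one_white:
  assumes "finite V" "i \<in> V" and w: "\<forall>u\<in>V. \<forall>v\<in>V. u \<noteq> v \<longrightarrow> 0 \<le> w u v \<and> w u v \<le> 1"
  shows "wstate V complete_adj w (V - {i}) k =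
    map_pmf (\<lambda>b. if b then V - {i} else V) (bernoulli_pmf (fail_prob V w i ^ k))"
proof (induction k)
  case 0
  then show ?case by (simp add: bernoulli_pmf_1 map_return_pmf)
next
  case (Suc k)
  let ?P = "fail_prob V w i"
  let ?g = "\<lambda>b. if b then V - {i} else V"
  have P: "0 \<le> ?P" "?P \<le> 1" using fail_prob_bounds[OF assms(2) w] by blast+
  then have Pk: "0 \<le> ?P ^ k" "?P ^ k \<le> 1" by (simp_all add: power_le_one)
  have "wstate V complete_adj w (V - {i}) (Suc k) =
      bind_pmf (bernoulli_pmf (?P ^ k)) (\<lambda>b. wstep V complete_adj w (?g b))"
    by (simp add: Suc bind_map_pmf)
  also have "\<dots> = bind_pmf (bernoulli_pmf (?P ^ k)) (\<lambda>b. map_pmf ?g (bernoulli_pmf (if b then ?P else 0)))"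
    by (intro bind_pmf_cong refl)
      (auto simp: wstep_complete_one_white[OF assms] wstep_complete_all_blue bernoulli_pmf_0 map_return_pmf)
  also have "\<dots> = map_pmf ?g (bernoulli_pmf (?P ^ Suc k))"
    using P Pk by (simp add: map_bind_pmf[symmetric] bind_bernoulli_pmf_thinning mult.commute)
  finally show ?case .
qed

lemma ptw_prob_complete_one_white:
  assumes "finite V" "i \<in> V" and w: "\<forall>u\<in>V. \<forall>v\<in>V. u \<noteq> v \<longrightarrow> 0 \<le> w u v \<and> w u v \<le> 1"
  shows "ptw_prob V complete_adj w (V - {i}) (Suc m) = fail_prob V w i ^ m * (1 - fail_prob V w i)"
proof -
  let ?P = "fail_prob V w i"
  let ?g = "\<lambda>b. if b then V - {i} else V"
  let ?F = "\<lambda>S. map_pmf (Pair S) (wstep V complete_adj w S)"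
  let ?done = "{(S, T). S \<noteq> V \<and> T = V}"
  have P: "0 \<le> ?P" "?P \<le> 1" using fail_prob_bounds[OF assms(2) w] by blast+
  then have Pm: "0 \<le> ?P ^ m" "?P ^ m \<le> 1" by (simp_all add: power_le_one)
  have "?F (V - {i}) = map_pmf (\<lambda>b. (V - {i}, ?g b)) (bernoulli_pmf ?P)"
    by (simp only: wstep_complete_one_white[OF assms] pmf.map_comp o_def)
  moreover have "(\<lambda>b. (V - {i}, ?g b)) -` ?done = {False}" using assms(2) by auto
  ultimately have success: "measure_pmf.prob (?F (V - {i})) ?done = 1 - ?P"
    using P by (simp only: measure_map_pmf) (simp add: measure_pmf_single)
  have no_success: "measure_pmf.prob (?F V) ?done = 0"
    by (simp add: wstep_complete_all_blue map_return_pmf)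
  have "ptw_prob V complete_adj w (V - {i}) (Suc m)
      = measure_pmf.prob (bind_pmf (bernoulli_pmf (?P ^ m)) (\<lambda>b. ?F (?g b))) ?done"
    by (simp only: ptw_prob_def wstate_complete_one_white[OF assms] bind_map_pmf
        diff_Suc_1 nat.distinct if_False)
  also have "\<dots> = ?P ^ m * (1 - ?P)"
    using Pm by (subst measure_bind_bernoulli_pmf)
      (simp_all only: if_True if_False success no_success mult_zero_right add_0_right)
  finally show ?thesis .
qed

lemma eptw_set_complete_one_white:
  assumes "finite V" "i \<in> V" and w: "\<forall>u\<in>V. \<forall>v\<in>V. u \<noteq> v \<longrightarrow> 0 \<le> w u v \<and> w u v \<le> 1"
    and less: "fail_prob V w i < 1"
  shows "eptw_set V complete_adj w (V - {i}) = 1 / (1 - fail_prob V w i)"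
proof -
  let ?P = "fail_prob V w i"
  let ?f = "\<lambda>k. real k * ptw_prob V complete_adj w (V - {i}) k"
  have "(\<lambda>k. of_nat (Suc k) * ?P ^ k) sums (1 / (1 - ?P)^2)"
    using fail_prob_bounds[OF assms(2) w] less by (intro geometric_deriv_sums) auto
  then have "(\<lambda>k. (1 - ?P) * (of_nat (Suc k) * ?P ^ k)) sums ((1 - ?P) * (1 / (1 - ?P)^2))"
    by (rule sums_mult)
  moreover have "(1 - ?P) * (1 / (1 - ?P)^2) = 1 / (1 - ?P)"
    using less by (simp add: power2_eq_square)
  moreover have "(\<lambda>k. (1 - ?P) * (of_nat (Suc k) * ?P ^ k)) = (\<lambda>k. ?f (Suc k))"
    by (simp add: ptw_prob_complete_one_white[OF assms(1-3)] mult_ac)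
  ultimately have "(\<lambda>k. ?f (Suc k)) sums (1 / (1 - ?P))" by simp
  then have "?f sums (1 / (1 - ?P) + ?f 0)" by (rule iffD1[OF sums_Suc_iff])
  then have "?f sums (1 / (1 - ?P))" by simp
  then show ?thesis unfolding eptw_set_def by (rule sums_unique[symmetric])
qed

lemma funpow_fixed_point: "f x = x \<Longrightarrow> (f ^^ k) x = x"
  by (induction k) simp_all

lemma zf_step_complete_stuck:
  assumes "\<And>v. V - B \<noteq> {v}"
  shows "zf_step V complete_adj B = B"
  using assms unfolding zf_step_def by (auto simp: white_nbrs_complete)

lemma zf_step_complete_one_white:
  assumes "i \<in> V" "u \<in> V" "u \<noteq> i"
  shows "zf_step V complete_adj (V - {i}) = V"
proof -
  have "V - (V - {i}) = {i}" using assms(1) by blast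
  then have "white_nbrs V complete_adj (V - {i}) u' = {i}" if "u' \<in> V - {i}" for u'
    by (simp only: white_nbrs_complete[OF that])
  then have "{v. \<exists>u'\<in>V - {i}. white_nbrs V complete_adj (V - {i}) u' = {v}} = {i}"
    using assms(2,3) by auto
  then show ?thesis unfolding zf_step_def using assms(1) by auto
qed

lemma is_zf_set_complete_iff:
  assumes "2 \<le> card V"
  shows "is_zf_set V complete_adj B \<longleftrightarrow> B = V \<or> (\<exists>i\<in>V. B = V - {i})"
proof
  assume zf: "is_zf_set V complete_adj B"
  then obtain k where k: "(zf_step V complete_adj ^^ k) B = V" and "B \<subseteq> V"
    unfolding is_zf_set_def by blast
  show "B = V \<or> (\<exists>i\<in>V. B = V - {i})"
  proof (rule ccontr)
    assume "\<not> (B = V \<or> (\<exists>i\<in>V. B = V - {i}))"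
    with \<open>B \<subseteq> V\<close> have "V - B \<noteq> {v}" for v by blast
    then have "(zf_step V complete_adj ^^ k) B = B"
      by (intro funpow_fixed_point zf_step_complete_stuck)
    with k \<open>\<not> (B = V \<or> _)\<close> show False by simp
  qed
next
  assume "B = V \<or> (\<exists>i\<in>V. B = V - {i})"
  then show "is_zf_set V complete_adj B"
  proof
    assume "B = V"
    then show ?thesis unfolding is_zf_set_def by (metis funpow_0 order_refl)
  next
    assume "\<exists>i\<in>V. B = V - {i}"
    then obtain i where "i \<in> V" "B = V - {i}" by blast
    moreover obtain u where "u \<in> V" "u \<noteq> i" using card_ge_2_obtains_other[OF assms \<open>i \<in> V\<close>] .
    ultimately have "(zf_step V complete_adj ^^ 1) B = V"
      using zf_step_complete_one_white by simp
    then show ?thesis unfolding is_zf_set_def using \<open>B = V - {i}\<close> by blast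
  qed
qed

lemma minimum_zf_sets_complete:
  assumes "2 \<le> card V"
  shows "{B. is_zf_set V complete_adj B \<and> card B = zf_number V complete_adj} = (\<lambda>i. V - {i}) ` V"
proof -
  have fin: "finite V" and ne: "V \<noteq> {}" using assms by (auto intro: card_ge_0_finite)
  have zf_sets: "{B. is_zf_set V complete_adj B} = insert V ((\<lambda>i. V - {i}) ` V)"
    using is_zf_set_complete_iff[OF assms] by blast
  have card_minus: "card (V - {i}) = card V - 1" if "i \<in> V" for i
    using that fin by simp
  then have "card ` {B. is_zf_set V complete_adj B} = {card V, card V - 1}"
    unfolding zf_sets image_insert image_image using ne by auto
  then have "zf_number V complete_adj = card V - 1"
    unfolding zf_number_def by simp
  moreover have "card V \<noteq> card V - 1" using assms by simp
  ultimately show ?thesis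
    unfolding zf_sets[symmetric] using is_zf_set_complete_iff[OF assms] card_minus by auto
qed

lemma eptw_complete:
  assumes "2 \<le> card V" and w: "\<forall>u\<in>V. \<forall>v\<in>V. u \<noteq> v \<longrightarrow> 0 < w u v \<and> w u v \<le> 1"
  shows "eptw V complete_adj w = 1 / (1 - Min (fail_prob V w ` V))"
proof -
  have fin: "finite V" and ne: "V \<noteq> {}" using assms(1) by (auto intro: card_ge_0_finite)
  have w01: "\<forall>u\<in>V. \<forall>v\<in>V. u \<noteq> v \<longrightarrow> 0 \<le> w u v \<and> w u v \<le> 1"
    using w by (meson less_imp_le)
  have less: "fail_prob V w i < 1" if "i \<in> V" for i
    using fail_prob_less_1[OF assms(1) that w] .
  have "eptw V complete_adj w = Min ((\<lambda>i. eptw_set V complete_adj w (V - {i})) ` V)"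
    by (simp add: eptw_def minimum_zf_sets_complete[OF assms(1)] image_image)
  also have "(\<lambda>i. eptw_set V complete_adj w (V - {i})) ` V = (\<lambda>x. 1 / (1 - x)) ` fail_prob V w ` V"
    unfolding image_image using eptw_set_complete_one_white[OF fin _ w01 less] by simp
  also have "Min \<dots> = 1 / (1 - Min (fail_prob V w ` V))"
  proof (rule mono_on_Min_commute[symmetric])
    show "mono_on (fail_prob V w ` V) (\<lambda>x. 1 / (1 - x))"
      by (rule mono_onI) (auto intro!: divide_left_mono dest!: less)
  qed (use fin ne in auto)
  finally show ?thesis .
qed

theorem mainTheorem2:
  fixes n :: nat and w :: "nat \<Rightarrow> nat \<Rightarrow> real"
  assumes "n \<ge> 2"
    and "\<And>i j. i \<in> {1..n} \<Longrightarrow> j \<in> {1..n} \<Longrightarrow> i \<noteq> j \<Longrightarrow> w i j = w j i"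
    and "\<And>i j. i \<in> {1..n} \<Longrightarrow> j \<in> {1..n} \<Longrightarrow> i \<noteq> j \<Longrightarrow> 0 < w i j \<and> w i j < 1"
  shows "eptw {1..n} (\<lambda>i j. i \<noteq> j) w
           = 1 / (1 - Min ((\<lambda>i. \<Prod>j\<in>{1..n} - {i}. 1 - w i j) ` {1..n}))"
proof -
  have "fail_prob {1..n} w i = (\<Prod>j\<in>{1..n} - {i}. 1 - w i j)" if "i \<in> {1..n}" for i
    unfolding fail_prob_def using assms(2) that by (intro prod.cong) auto
  then have "fail_prob {1..n} w ` {1..n} = (\<lambda>i. \<Prod>j\<in>{1..n} - {i}. 1 - w i j) ` {1..n}"
    by (rule image_cong[OF refl])
  moreover have "eptw {1..n} complete_adj w = 1 / (1 - Min (fail_prob {1..n} w ` {1..n}))"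
    using assms(1,3) by (intro eptw_complete) (auto simp: less_imp_le)
  ultimately show ?thesis by simp
qed

end
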